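(* Let $R$ be a finite commutative principal ideal ring with unity. Suppose that $R$ has exactly two associated prime ideals $p_1,p_2$ (i.e. $\lvert \operatorname{Ass}(R)\rvert=2$) and that $p_1\cap p_2=\{0\}$. Then the zero divisor graph $\Gamma(R)$ is a divisor graph.
   Context: $\operatorname{Ass}(R)$ is the set of associated primes of $R$ as an $R$-module, i.e. prime ideals of $R$ of the form $\operatorname{ann}(x)$ for some nonzero $x\in R$. The zero divisor graph $\Gamma(R)$ is the simple graph whose vertex set is the set of nonzero zero divisors of $R$, distinct $a,b$ adjacent iff $ab=0$. For a nonempty set $T$ of positive integers, the divisor graph $G(T)$ has vertex set $T$, with distinct $i,j$ adjacent iff $i\mid j$ or $j\mid i$; a graph is a divisor graph if it is isomorphic to some $G(T)$. *)

theory Defs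
  imports Main
begin

text \<open>Ideals of a commutative ring with unity (type-class idiom; the ring is the whole type).\<close>
definition is_ideal :: "'a::comm_ring_1 set \<Rightarrow> bool" where
  "is_ideal I \<longleftrightarrow> 0 \<in> I \<and> (\<forall>x\<in>I. \<forall>y\<in>I. x + y \<in> I) \<and> (\<forall>r. \<forall>x\<in>I. r * x \<in> I)"

definition principal_ideal_ring :: "'a::comm_ring_1 itself \<Rightarrow> bool" where
  "principal_ideal_ring _ \<longleftrightarrow>
     (\<forall>I::'a set. is_ideal I \<longrightarrow> (\<exists>a. I = {r * a | r. True}))"

definition prime_ideal :: "'a::comm_ring_1 set \<Rightarrow> bool" where
  "prime_ideal P \<longleftrightarrow> is_ideal P \<and> P \<noteq> UNIV \<and> (\<forall>a b. a * b \<in> P \<longrightarrow> a \<in> P \<or> b \<in> P)"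

definition ann :: "'a::comm_ring_1 \<Rightarrow> 'a set" where
  "ann x = {r. r * x = 0}"

definition ass_primes :: "'a::comm_ring_1 set set" where
  "ass_primes = {P. prime_ideal P \<and> (\<exists>x. x \<noteq> 0 \<and> P = ann x)}"

definition nz_zero_divisors :: "'a::comm_ring_1 set" where
  "nz_zero_divisors = {a. a \<noteq> 0 \<and> (\<exists>b. b \<noteq> 0 \<and> a * b = 0)}"

definition zdg_adj :: "'a::comm_ring_1 \<Rightarrow> 'a \<Rightarrow> bool" where
  "zdg_adj a b \<longleftrightarrow> a \<noteq> b \<and> a * b = 0"

definition is_divisor_graph :: "'v set \<Rightarrow> ('v \<Rightarrow> 'v \<Rightarrow> bool) \<Rightarrow> bool" where
  "is_divisor_graph V E \<longleftrightarrow>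
     (\<exists>(T::nat set) f. T \<noteq> {} \<and> (\<forall>t\<in>T. 0 < t) \<and> bij_betw f V T \<and>
        (\<forall>a\<in>V. \<forall>b\<in>V. a \<noteq> b \<longrightarrow> (E a b \<longleftrightarrow> (f a dvd f b \<or> f b dvd f a))))"

end

theory Submission
  imports Defs
begin

text \<open>In a finite ring every annihilator of a nonzero element lies in a maximal one, and
  maximal annihilators of nonzero elements are prime; so the nonzero zero divisors are the
  nonzero elements of the associated primes. If these are p1, p2 with p1 \<inter> p2 = 0, then for
  nonzero a \<in> p1 we have a b = 0 iff b \<in> p2, so \<Gamma>(R) is complete bipartite with parts
  p1 - {0} and p2 - {0}. A complete bipartite graph with parts of sizes m and n is a divisor graph:
  map the first part injectively into the antichain (m, 2m] and the second into (2m+1)! times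
  the antichain (n, 2n].\<close>

lemma maximal_annihilator_exists:
  fixes b :: "'a::{comm_ring_1, finite}"
  assumes "b \<noteq> 0"
  obtains c where "c \<noteq> 0" "ann b \<subseteq> ann c"
    "\<And>d. d \<noteq> 0 \<Longrightarrow> ann c \<subseteq> ann d \<Longrightarrow> ann d = ann c"
proof -
  let ?S = "ann ` {d. d \<noteq> 0 \<and> ann b \<subseteq> ann d}"
  have "ann b \<in> ?S" using assms by simp
  then have "\<exists>M\<in>?S. ann b \<subseteq> M \<and> (\<forall>X\<in>?S. M \<subseteq> X \<longrightarrow> M = X)"
    by (rule finite_has_maximal2[OF finite])
  then obtain c where c: "c \<noteq> 0" "ann b \<subseteq> ann c"
    and max: "\<forall>X\<in>?S. ann c \<subseteq> X \<longrightarrow> ann c = X"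
    by auto
  show thesis
  proof (rule that[OF c])
    fix d assume "d \<noteq> 0" "ann c \<subseteq> ann d"
    with c(2) have "ann d \<in> ?S" by auto
    from max[rule_format, OF this \<open>ann c \<subseteq> ann d\<close>] show "ann d = ann c" by simp
  qed
qed

lemma maximal_annihilator_prime:
  fixes c :: "'a::comm_ring_1"
  assumes "c \<noteq> 0" and maximal: "\<And>d. d \<noteq> 0 \<Longrightarrow> ann c \<subseteq> ann d \<Longrightarrow> ann d = ann c"
  shows "prime_ideal (ann c)"
  unfolding prime_ideal_def is_ideal_def
proof (intro conjI ballI allI impI)
  show "ann c \<noteq> UNIV"
  proof
    assume "ann c = UNIV"
    then have "1 \<in> ann c" by simp
    with assms(1) show False by (simp add: ann_def)
  qed
next
  fix u v assume uv: "u * v \<in> ann c"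
  show "u \<in> ann c \<or> v \<in> ann c"
  proof (cases "u \<in> ann c")
    case True
    then show ?thesis ..
  next
    case False
    then have "u * c \<noteq> 0" by (simp add: ann_def)
    moreover have "ann c \<subseteq> ann (u * c)"
      by (auto simp: ann_def) (metis mult.left_commute mult_zero_right)
    ultimately have "ann (u * c) = ann c" using maximal by blast
    moreover have "v \<in> ann (u * c)" using uv by (simp add: ann_def ac_simps)
    ultimately show ?thesis by simp
  qed
qed (auto simp: ann_def distrib_right mult.assoc)

lemma nz_zero_divisors_eq_Union_ass_primes:
  "(nz_zero_divisors :: 'a::{comm_ring_1, finite} set) = \<Union>ass_primes - {0}"
proof
  show "(nz_zero_divisors :: 'a set) \<subseteq> \<Union>ass_primes - {0}"
  proof (rule subsetI)
    fix a :: 'a assume "a \<in> nz_zero_divisors"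
    then obtain b where ab: "a \<noteq> 0" "b \<noteq> 0" "a * b = 0"
      unfolding nz_zero_divisors_def by blast
    obtain c where c: "c \<noteq> 0" "ann b \<subseteq> ann c"
      and maximal: "\<And>d. d \<noteq> 0 \<Longrightarrow> ann c \<subseteq> ann d \<Longrightarrow> ann d = ann c"
      using maximal_annihilator_exists[OF ab(2)] by blast
    have "ann c \<in> ass_primes"
      unfolding ass_primes_def using maximal_annihilator_prime[OF c(1) maximal] c(1) by blast
    moreover have "a \<in> ann c" using c(2) ab(3) by (auto simp: ann_def)
    ultimately show "a \<in> \<Union>ass_primes - {0}" using ab(1) by blast
  qed
  show "\<Union>ass_primes - {0} \<subseteq> (nz_zero_divisors :: 'a set)"
  proof (rule subsetI)
    fix a :: 'a assume "a \<in> \<Union>ass_primes - {0}"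
    then obtain x where "x \<noteq> 0" "a \<in> ann x" "a \<noteq> 0"
      unfolding ass_primes_def by blast
    then show "a \<in> nz_zero_divisors"
      unfolding nz_zero_divisors_def ann_def by blast
  qed
qed

lemma mult_eq_0_iff_mem_complementary_prime:
  fixes a b :: "'a::comm_ring_1"
  assumes "prime_ideal P" "prime_ideal Q" "P \<inter> Q = {0}" "a \<in> P" "a \<noteq> 0"
  shows "a * b = 0 \<longleftrightarrow> b \<in> Q"
proof
  assume "a * b = 0"
  moreover have "0 \<in> Q" using assms(2) by (simp add: prime_ideal_def is_ideal_def)
  ultimately have "a \<in> Q \<or> b \<in> Q"
    using assms(2) unfolding prime_ideal_def by metis
  then show "b \<in> Q" using assms(3-5) by blast
next
  assume "b \<in> Q"
  then have "a * b \<in> Q" "b * a \<in> P"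
    using assms(1,2,4) unfolding prime_ideal_def is_ideal_def by blast+
  then have "a * b \<in> P \<inter> Q" by (simp add: mult.commute)
  then show "a * b = 0" using assms(3) by blast
qed

lemma zdg_adj_complementary_primes_iff:
  fixes a b :: "'a::comm_ring_1"
  assumes P: "prime_ideal P" and Q: "prime_ideal Q" and "P \<inter> Q = {0}"
    and a: "a \<in> (P - {0}) \<union> (Q - {0})" and b: "b \<in> (P - {0}) \<union> (Q - {0})" and "a \<noteq> b"
  shows "zdg_adj a b \<longleftrightarrow> (a \<in> P - {0} \<longleftrightarrow> b \<in> Q - {0})"
proof (cases "a \<in> P")
  case True
  with a have "a * b = 0 \<longleftrightarrow> b \<in> Q"
    using mult_eq_0_iff_mem_complementary_prime[OF P Q \<open>P \<inter> Q = {0}\<close>] by blast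
  with True a b \<open>a \<noteq> b\<close> show ?thesis by (auto simp: zdg_adj_def)
next
  case False
  have "Q \<inter> P = {0}" using \<open>P \<inter> Q = {0}\<close> by blast
  with False a have "a * b = 0 \<longleftrightarrow> b \<in> P"
    using mult_eq_0_iff_mem_complementary_prime[OF Q P] by blast
  with False a b \<open>a \<noteq> b\<close> \<open>P \<inter> Q = {0}\<close> show ?thesis by (auto simp: zdg_adj_def)
qed

lemma dvd_in_half_interval_imp_eq:
  fixes x y k :: nat
  assumes "k < x" "x \<le> 2 * k" "k < y" "y \<le> 2 * k" "x dvd y"
  shows "x = y"
proof (rule ccontr)
  assume "x \<noteq> y"
  obtain q where q: "y = x * q" using assms(5) by blast
  with \<open>x \<noteq> y\<close> assms(3) have "q \<ge> 2" by (cases q) auto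
  then have "x * 2 \<le> y" using q by (metis mult_le_mono2)
  then show False using assms by linarith
qed

lemma finite_set_antichain_embedding:
  assumes "finite A"
  obtains g :: "'a \<Rightarrow> nat"
  where "\<And>x. x \<in> A \<Longrightarrow> 0 < g x \<and> g x \<le> 2 * card A"
    and "\<And>x y. x \<in> A \<Longrightarrow> y \<in> A \<Longrightarrow> g x dvd g y \<Longrightarrow> x = y"
proof -
  let ?k = "card A"
  obtain h where h: "bij_betw h A {0..<?k}" using ex_bij_betw_finite_nat[OF assms] by blast
  define g where "g x = ?k + 1 + h x" for x
  have range: "?k < g x \<and> g x \<le> 2 * ?k" if "x \<in> A" for x
    using bij_betwE[OF h] that unfolding g_def by fastforce
  have inj: "inj_on g A"
    using h unfolding g_def bij_betw_def inj_on_def by simp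
  show thesis
  proof
    show "0 < g x \<and> g x \<le> 2 * ?k" if "x \<in> A" for x using range[OF that] by simp
    show "x = y" if "x \<in> A" "y \<in> A" "g x dvd g y" for x y
      using dvd_in_half_interval_imp_eq[of ?k "g x" "g y"] range that inj_onD[OF inj] by blast
  qed
qed

lemma complete_bipartite_is_divisor_graph:
  assumes "finite A" "finite B" "A \<inter> B = {}" "A \<union> B \<noteq> {}"
    and adj: "\<And>a b. a \<in> A \<union> B \<Longrightarrow> b \<in> A \<union> B \<Longrightarrow> a \<noteq> b \<Longrightarrow> E a b \<longleftrightarrow> (a \<in> A \<longleftrightarrow> b \<in> B)"
  shows "is_divisor_graph (A \<union> B) E"
proof -
  obtain gA where gA: "\<And>x. x \<in> A \<Longrightarrow> 0 < gA x \<and> gA x \<le> 2 * card A"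
    "\<And>x y. x \<in> A \<Longrightarrow> y \<in> A \<Longrightarrow> gA x dvd gA y \<Longrightarrow> x = y"
    using finite_set_antichain_embedding[OF assms(1)] by blast
  obtain gB where gB: "\<And>x. x \<in> B \<Longrightarrow> 0 < gB x \<and> gB x \<le> 2 * card B"
    "\<And>x y. x \<in> B \<Longrightarrow> y \<in> B \<Longrightarrow> gB x dvd gB y \<Longrightarrow> x = y"
    using finite_set_antichain_embedding[OF assms(2)] by blast
  define L :: nat where "L = fact (2 * card A + 1)"
  have "L > 0" by (simp add: L_def)
  define f where "f x = (if x \<in> A then gA x else L * gB x)" for x
  have f_A: "f a = gA a" if "a \<in> A" for a using that by (simp add: f_def)
  have f_B: "f b = L * gB b" if "b \<in> B" for b using that assms(3) by (auto simp: f_def)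
  have A_dvd_B: "f a dvd f b" if "a \<in> A" "b \<in> B" for a b
  proof -
    have "gA a dvd L" unfolding L_def using gA(1)[OF that(1)] by (simp add: dvd_fact)
    then show ?thesis using that f_A f_B by simp
  qed
  have A_less_B: "f a < f b" if "a \<in> A" "b \<in> B" for a b
  proof -
    have "f a \<le> 2 * card A" using gA(1)[OF that(1)] f_A[OF that(1)] by simp
    also have "\<dots> < L" unfolding L_def using fact_ge_self[of "2 * card A + 1"] by linarith
    also have "\<dots> \<le> f b" using gB(1)[OF that(2)] f_B[OF that(2)] by simp
    finally show ?thesis .
  qed
  have A_dvd_A: "f a dvd f b \<Longrightarrow> a = b" if "a \<in> A" "b \<in> A" for a b
    using that gA(2) f_A by simp
  have B_dvd_B: "f a dvd f b \<Longrightarrow> a = b" if "a \<in> B" "b \<in> B" for a b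
    using that gB(2) f_B \<open>L > 0\<close> by simp
  have dvd_iff: "f a dvd f b \<or> f b dvd f a \<longleftrightarrow> (a \<in> A \<longleftrightarrow> b \<in> B)"
    if "a \<in> A \<union> B" "b \<in> A \<union> B" "a \<noteq> b" for a b
    using that assms(3) A_dvd_A B_dvd_B A_dvd_B by blast
  have "inj_on f (A \<union> B)"
    by (rule inj_onI) (metis UnE A_dvd_A B_dvd_B A_less_B dvd_refl less_irrefl)
  moreover have "0 < f x" if "x \<in> A \<union> B" for x
    using that gA(1) gB(1) f_A f_B \<open>L > 0\<close> by auto
  ultimately show ?thesis
    unfolding is_divisor_graph_def using assms(4) adj dvd_iff
    by (intro exI[of _ "f ` (A \<union> B)"] exI[of _ f]) (auto simp: bij_betw_def)
qed

theorem theorem2p7: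
  fixes p1 p2 :: "'a::{comm_ring_1, finite} set"
  assumes "principal_ideal_ring TYPE('a)"
    and "ass_primes = {p1, p2}"
    and "p1 \<noteq> p2"
    and "p1 \<inter> p2 = {0}"
  shows "is_divisor_graph (nz_zero_divisors :: 'a set) zdg_adj"
proof -
  have prime: "prime_ideal p1" "prime_ideal p2"
    using assms(2) by (auto simp: ass_primes_def)
  then have zero: "0 \<in> p1" "0 \<in> p2"
    by (simp_all add: prime_ideal_def is_ideal_def)
  have vertices: "(nz_zero_divisors :: 'a set) = (p1 - {0}) \<union> (p2 - {0})"
    using nz_zero_divisors_eq_Union_ass_primes assms(2) by auto
  have disjoint: "(p1 - {0}) \<inter> (p2 - {0}) = {}"
    using assms(4) by blast
  have nonempty: "(p1 - {0}) \<union> (p2 - {0}) \<noteq> {}"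
    using assms(3) zero by blast
  show ?thesis
    unfolding vertices
    by (rule complete_bipartite_is_divisor_graph[OF finite finite disjoint nonempty
          zdg_adj_complementary_primes_iff[OF prime assms(4)]])
qed

end
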